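(* Let $m,n\in\mathbb{N}$ with $n\le m\le 2n$. Let $L>0$, $C>1$, $\Gamma\subseteq\mathbb{Z}_n$, $r=20C(\log(|\Gamma|/2)+1)$, and $\tau<\frac{L}{20}\cdot\frac{1}{3+2\log(n)}$. Let $f:\mathbb{Z}_n\to\mathbb{C}$ and suppose that $|\alpha-\alpha'|_n>r$ for all distinct $\alpha,\alpha'\in\Gamma$, that $L\le|\widehat f(\alpha)|\le CL$ for all $\alpha\in\Gamma$, and that $|\widehat f(\alpha)|\le\tau$ for all $\alpha\notin\Gamma$. Then $|\widehat{\widetilde f}(\lfloor\frac mn\alpha\rceil)|\ge\frac15L$ for all $\alpha\in\Gamma$.
   Context: $\mathbb{Z}_n=\{0,\dots,n-1\}$ with addition mod $n$; elements are treated as these integer representatives. For $h:\mathbb{Z}_n\to\mathbb{C}$, $\widehat h(\alpha)=\frac1n\sum_{x\in\mathbb{Z}_n}h(x)\exp(-2\pi i\alpha x/n)$ (analogously on $\mathbb{Z}_m$). $\widetilde f:\mathbb{Z}_m\to\mathbb{C}$ is $\widetilde f(x)=f(x)$ for $0\le x<\min(n,m)$ and $0$ otherwise. $\lfloor x\rceil$ is the integer nearest to $x$, taken in $\mathbb{Z}_m$. For $k\in\mathbb{N}$, $x\in\mathbb{R}$: $|x|_k=\min\{|x-kz|:z\in\mathbb{Z}\}$. $\log$ is the natural logarithm. *)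

theory Defs
  imports Complex_Main
begin

text \<open>Elements of Z_n are represented by naturals in {0..<n}; functions Z_n -> C by
  nat => complex, only values on {0..<n} being relevant.\<close>

definition dft :: "nat \<Rightarrow> (nat \<Rightarrow> complex) \<Rightarrow> nat \<Rightarrow> complex" where
  "dft n h \<alpha> = (1 / of_nat n) *
     (\<Sum>x<n. h x * exp (- 2 * pi * \<i> * of_nat \<alpha> * of_nat x / of_nat n))"

definition ext_fun :: "nat \<Rightarrow> nat \<Rightarrow> (nat \<Rightarrow> complex) \<Rightarrow> nat \<Rightarrow> complex" where
  "ext_fun n m f x = (if x < min n m then f x else 0)"

definition circ_abs :: "nat \<Rightarrow> real \<Rightarrow> real" where
  "circ_abs k x = Inf {\<bar>x - real k * of_int z\<bar> | z. True}"

definition round_mod :: "nat \<Rightarrow> real \<Rightarrow> nat" where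
  "round_mod m x = nat (round x mod int m)"

end

theory Submission
  imports Defs "HOL-Analysis.Analysis"
begin

text \<open>
  By Fourier inversion, the padded DFT at \<open>\<gamma> = round (m \<alpha> / n)\<close> equals
  \<open>\<Sum>\<beta><n. F \<beta> * K (\<beta>/n - \<gamma>/m)\<close>, where \<open>F = dft n f\<close> and \<open>K\<close> is a Dirichlet kernel
  scaled by \<open>1/m\<close>. Rounding shifts the argument of the term \<open>\<beta> = \<alpha>\<close> by at most \<open>1/(2m)\<close>,
  so (as \<open>n/m \<ge> 1/2\<close>) its kernel value is at least \<open>11/25\<close>; for \<open>\<beta> \<noteq> \<alpha>\<close> Jordan's
  inequality bounds the kernel by \<open>1 / |\<beta> - \<alpha>|_n\<close>. The frequencies in \<open>\<Gamma>\<close> are \<open>r\<close>-separated,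
  so these weights sum over \<open>\<Gamma>\<close> to at most \<open>2 harm |\<Gamma>| / r\<close> and the leakage from \<open>\<Gamma>\<close> is at
  most \<open>19 L / 100\<close>; the remaining frequencies leak at most \<open>2 \<tau> (1 + ln n) \<le> L / 20\<close>.
  Hence the coefficient is at least \<open>(44 - 19 - 5) L / 100 = L / 5\<close>.
\<close>

lemma norm_cis_minus_one: "cmod (cis a - 1) = 2 * \<bar>sin (a / 2)\<bar>"
proof -
  have "(cmod (cis a - 1))^2 = (cos a - 1)^2 + (sin a)^2"
    by (simp add: cmod_power2)
  also have "\<dots> = 2 - 2 * cos a"
    using sin_cos_squared_add[of a] by (simp add: power2_eq_square algebra_simps)
  also have "\<dots> = (2 * \<bar>sin (a / 2)\<bar>)^2"
    using cos_double_sin[of "a / 2"] by (simp add: power2_eq_square)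
  finally have "(cmod (cis a - 1))^2 = (2 * \<bar>sin (a / 2)\<bar>)^2" .
  thus ?thesis by (rule power2_eq_imp_eq) auto
qed

lemma norm_sum_cis_mult_abs_sin:
  "cmod (\<Sum>x<N. cis (2 * pi * \<theta> * real x)) * \<bar>sin (pi * \<theta>)\<bar> = \<bar>sin (pi * real N * \<theta>)\<bar>"
proof -
  have pow: "cis (2 * pi * \<theta> * real x) = cis (2 * pi * \<theta>) ^ x" for x
    using Complex.DeMoivre[of "2 * pi * \<theta>" x] by (simp add: mult_ac)
  have "(cis (2 * pi * \<theta>) - 1) * (\<Sum>x<N. cis (2 * pi * \<theta> * real x)) = cis (2 * pi * \<theta>) ^ N - 1"
    unfolding pow by (simp add: power_diff_1_eq)
  hence "cmod (cis (2 * pi * \<theta>) - 1) * cmod (\<Sum>x<N. cis (2 * pi * \<theta> * real x))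
      = cmod (cis (2 * pi * \<theta>) ^ N - 1)"
    by (simp only: norm_mult[symmetric])
  also have "cis (2 * pi * \<theta>) ^ N = cis (2 * pi * (real N * \<theta>))"
    by (simp add: Complex.DeMoivre mult_ac)
  finally have "2 * \<bar>sin (pi * \<theta>)\<bar> * cmod (\<Sum>x<N. cis (2 * pi * \<theta> * real x))
      = 2 * \<bar>sin (pi * (real N * \<theta>))\<bar>"
    unfolding norm_cis_minus_one by (simp add: mult.assoc)
  thus ?thesis by (simp add: mult_ac)
qed

lemma sin_ge_cubic:
  fixes t :: real
  assumes "t \<ge> 0"
  shows "sin t \<ge> t - t^3 / 6"
proof -
  have "\<bar>sin t - (\<Sum>m<3. sin_coeff m * t ^ m)\<bar> \<le> inverse (fact 3) * \<bar>t\<bar> ^ 3"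
    by (rule Maclaurin_sin_bound)
  moreover have "(\<Sum>m<3. sin_coeff m * t ^ m) = t"
    by (simp add: eval_nat_numeral sin_coeff_def)
  moreover have "inverse (fact 3 :: real) = 1 / 6" by (simp add: eval_nat_numeral)
  ultimately have "\<bar>sin t - t\<bar> \<le> t^3 / 6" using assms by simp
  thus ?thesis by linarith
qed

lemma cos_ge_quadratic: "cos y \<ge> 1 - (y::real)^2 / 2"
proof -
  have "cos y = 1 - 2 * sin (y / 2) ^ 2"
    using cos_double_sin[of "y / 2"] by simp
  moreover have "sin (y / 2) ^ 2 \<le> (y / 2)^2"
    using abs_sin_x_le_abs_x[of "y / 2"] by (metis abs_le_square_iff)
  ultimately show ?thesis by (simp add: power2_eq_square)
qed

lemma jordan_inequality:
  fixes x :: real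
  assumes "0 \<le> x" "x \<le> pi / 2"
  shows "2 * x / pi \<le> sin x"
proof (cases "x \<le> 7/5")
  case True
  have "x^2 \<le> 49/25" using True assms(1) mult_mono[of x "7/5" x "7/5"] by (simp add: power2_eq_square)
  moreover have "2 / pi \<le> 2/3" using pi_gt3 by (simp add: field_simps)
  ultimately have "2 / pi \<le> 1 - x^2 / 6" by linarith
  hence "x * (2 / pi) \<le> x * (1 - x^2 / 6)"
    using assms(1) by (rule mult_left_mono)
  hence "2 * x / pi \<le> x - x^3 / 6" by (simp add: algebra_simps power3_eq_cube power2_eq_square)
  thus ?thesis using sin_ge_cubic[OF assms(1)] by linarith
next
  case False
  define y where "y = pi / 2 - x"
  have y: "0 \<le> y" "y \<le> 1" using assms False pi_approx unfolding y_def by auto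
  have "y^2 / 2 \<le> 2 * y / pi"
  proof -
    have "y * y \<le> y * 1" using y by (intro mult_left_mono) auto
    moreover have "pi * y \<le> 4 * y" using y pi_less_4 by (intro mult_right_mono) auto
    hence "y \<le> 4 * y / pi" by (simp add: field_simps)
    ultimately show ?thesis by (simp add: power2_eq_square)
  qed
  hence "2 * x / pi \<le> 1 - y^2 / 2" unfolding y_def by (simp add: field_simps)
  moreover have "sin x = cos y" unfolding y_def by (simp add: cos_diff)
  ultimately show ?thesis using cos_ge_quadratic[of y] by linarith
qed

lemma abs_sin_pi_ge_min:
  fixes u :: real
  assumes "0 \<le> u" "u \<le> 1"
  shows "2 * min u (1 - u) \<le> \<bar>sin (pi * u)\<bar>"
proof (cases "u \<le> 1/2")
  case True
  thus ?thesis using jordan_inequality[of "pi * u"] assms by (auto simp: min_def)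
next
  case False
  have "sin (pi * u) = sin (pi * (1 - u))" by (simp add: algebra_simps sin_diff)
  thus ?thesis using jordan_inequality[of "pi * (1 - u)"] assms False by (auto simp: min_def)
qed

lemma ln_2_le: "ln (2::real) \<le> 0.9"
proof -
  have "exp (0.45::real) \<ge> 1.45" using exp_ge_add_one_self[of "0.45::real"] by simp
  hence "exp (0.45::real) * exp 0.45 \<ge> 1.45 * 1.45" by (intro mult_mono) auto
  hence "exp (0.9::real) \<ge> 2" by (simp add: exp_add[symmetric])
  hence "ln 2 \<le> ln (exp (0.9::real))" by (subst ln_le_cancel_iff) auto
  thus ?thesis by simp
qed

subsection \<open>Harmonic sums over separated sets\<close>

lemma harm_le_one_plus_ln:
  assumes "n \<ge> 1"
  shows "(harm n :: real) \<le> 1 + ln (real n)"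
  using euler_mascheroni_sequence_decreasing[of 1 n] assms by (simp add: harm_def)

lemma sum_inverse_reflect_eq_harm: "(\<Sum>k\<in>{1..N}. 1 / real (Suc N - k)) = harm N"
proof -
  have "(\<Sum>k\<in>{1..N}. 1 / real (Suc N - k)) = (\<Sum>k\<in>{1..N}. 1 / real (Suc N - (N + 1 - k)))"
    by (subst sum.atLeastAtMost_rev) simp
  also have "\<dots> = (\<Sum>k\<in>{1..N}. 1 / real k)" by (rule sum.cong) auto
  finally show ?thesis unfolding harm_def by (simp add: divide_inverse)
qed

lemma separated_card_mult_less_Max:
  fixes S :: "real set"
  assumes "finite S" "S \<noteq> {}" "\<forall>s\<in>S. s > r"
    and "\<forall>s\<in>S. \<forall>s'\<in>S. s \<noteq> s' \<longrightarrow> \<bar>s - s'\<bar> > r"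
  shows "real (card S) * r < Max S"
  using assms
proof (induction S rule: finite_linorder_max_induct)
  case empty
  then show ?case by simp
next
  case (insert b A)
  show ?case
  proof (cases "A = {}")
    case True
    with insert.prems show ?thesis by simp
  next
    case False
    have "real (card A) * r < Max A" using insert False by auto
    moreover have "Max A \<in> A" "Max A < b" using insert.hyps False by auto
    moreover have "\<bar>b - Max A\<bar> > r" using insert.prems calculation(2,3) by auto
    moreover have "Max (insert b A) = b" "card (insert b A) = Suc (card A)"
      using insert.hyps by (auto intro: Max_eqI less_imp_le)
    ultimately show ?thesis by (simp add: algebra_simps)
  qed
qed

lemma sum_inverse_separated_le_harm:
  fixes S :: "real set"
  assumes "r > 0" "finite S" "\<forall>s\<in>S. s > r"
    and "\<forall>s\<in>S. \<forall>s'\<in>S. s \<noteq> s' \<longrightarrow> \<bar>s - s'\<bar> > r"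
  shows "(\<Sum>s\<in>S. 1 / s) \<le> harm (card S) / r"
  using assms(2-)
proof (induction S rule: finite_linorder_max_induct)
  case empty
  then show ?case by (simp add: harm_def)
next
  case (insert b A)
  have b_not_A: "b \<notin> A" using insert.hyps by auto
  have "Max (insert b A) = b" using insert.hyps by (auto intro: Max_eqI less_imp_le)
  hence "real (Suc (card A)) * r < b"
    using separated_card_mult_less_Max[OF _ _ insert.prems] insert.hyps b_not_A by simp
  moreover have "real (Suc (card A)) * r > 0" using assms(1) by simp
  ultimately have "1 / b \<le> 1 / (real (Suc (card A)) * r)"
    by (intro frac_le) auto
  moreover have "(\<Sum>s\<in>A. 1 / s) \<le> harm (card A) / r" using insert by auto
  ultimately have "(\<Sum>s\<in>insert b A. 1 / s) \<le> (harm (card A) + 1 / real (Suc (card A))) / r"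
    using insert.hyps b_not_A by (simp add: add_divide_distrib)
  then show ?case
    using insert.hyps b_not_A by (simp add: harm_Suc divide_inverse)
qed

lemma sum_inverse_separated_image_le_harm:
  fixes h :: "'a \<Rightarrow> real"
  assumes "r > 0" "finite A" "\<forall>\<beta>\<in>A. h \<beta> > r"
    and "\<forall>\<beta>\<in>A. \<forall>\<beta>'\<in>A. \<beta> \<noteq> \<beta>' \<longrightarrow> \<bar>h \<beta> - h \<beta>'\<bar> > r"
  shows "(\<Sum>\<beta>\<in>A. 1 / h \<beta>) \<le> harm (card A) / r"
proof -
  have inj: "inj_on h A"
    using assms(1,4) by (force intro: inj_onI)
  have "(\<Sum>\<beta>\<in>A. 1 / h \<beta>) = (\<Sum>s\<in>h ` A. 1 / s)" by (simp add: sum.reindex[OF inj])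
  also have "\<dots> \<le> harm (card (h ` A)) / r"
    by (rule sum_inverse_separated_le_harm) (use assms in auto)
  finally show ?thesis by (simp add: card_image[OF inj])
qed

subsection \<open>The DFT of a zero-padded signal\<close>

lemma exp_eq_cis:
  "exp (complex_of_real (- 2 * pi) * \<i> * of_nat a * of_nat b / of_nat c) = cis (- 2 * pi * real a * real b / real c)"
  unfolding cis_conv_exp by (simp add: mult_ac)

lemma sum_cis_orthogonal:
  assumes "x < n" "y < n"
  shows "(\<Sum>\<beta><n. cis (2 * pi * ((real x - real y) / real n) * real \<beta>)) = (if x = y then of_nat n else 0)"
proof (cases "x = y")
  case False
  define \<theta> where "\<theta> = (real x - real y) / real n"
  have n: "real n > 0" using assms by simp
  have "sin (pi * real n * \<theta>) = 0"
    unfolding \<theta>_def using n sin_zero_iff_int2[of "pi * (real x - real y)"]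
    by (auto intro!: exI[of _ "int x - int y"])
  moreover have "sin (pi * \<theta>) \<noteq> 0"
  proof
    assume "sin (pi * \<theta>) = 0"
    then obtain i :: int where "pi * \<theta> = of_int i * pi" by (auto simp: sin_zero_iff_int2)
    hence "\<theta> = of_int i" by simp
    hence "real x - real y = of_int i * real n" unfolding \<theta>_def using n by (simp add: field_simps)
    hence "int x - int y = i * int n" by (metis of_int_eq_iff of_int_mult of_int_diff of_int_of_nat_eq)
    moreover have "\<bar>int x - int y\<bar> < int n" using assms by auto
    ultimately have "\<bar>i\<bar> * int n < 1 * int n" by (simp add: abs_mult)
    hence "\<bar>i\<bar> < 1" by (rule mult_right_less_imp_less) simp
    hence "i = 0" by simp
    with \<open>int x - int y = i * int n\<close> False show False by simp
  qed
  ultimately have "cmod (\<Sum>\<beta><n. cis (2 * pi * \<theta> * real \<beta>)) = 0"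
    using norm_sum_cis_mult_abs_sin[of \<theta> n] by auto
  thus ?thesis using False unfolding \<theta>_def by simp
qed simp

lemma dft_inversion:
  assumes "x < n"
  shows "(\<Sum>\<beta><n. dft n f \<beta> * cis (2 * pi * real \<beta> * real x / real n)) = f x"
proof -
  have n: "real n > 0" using assms by simp
  have term_eq: "dft n f \<beta> * cis (2 * pi * real \<beta> * real x / real n)
      = (1 / of_nat n) * (\<Sum>y<n. f y * cis (2 * pi * ((real x - real y) / real n) * real \<beta>))" for \<beta>
  proof -
    have "dft n f \<beta> * cis (2 * pi * real \<beta> * real x / real n)
       = (1 / of_nat n) * (\<Sum>y<n. f y * (cis (- 2 * pi * real \<beta> * real y / real n) * cis (2 * pi * real \<beta> * real x / real n)))"
      unfolding dft_def exp_eq_cis by (simp add: sum_distrib_left sum_distrib_right mult_ac)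
    thus ?thesis by (simp add: cis_mult field_simps)
  qed
  have "(\<Sum>\<beta><n. dft n f \<beta> * cis (2 * pi * real \<beta> * real x / real n))
      = (1 / of_nat n) * (\<Sum>\<beta><n. \<Sum>y<n. f y * cis (2 * pi * ((real x - real y) / real n) * real \<beta>))"
    unfolding term_eq by (simp only: sum_distrib_left)
  also have "\<dots> = (1 / of_nat n) * (\<Sum>y<n. f y * (\<Sum>\<beta><n. cis (2 * pi * ((real x - real y) / real n) * real \<beta>)))"
    by (subst sum.swap) (simp only: sum_distrib_left)
  also have "\<dots> = (1 / of_nat n) * (\<Sum>y<n. if y = x then f y * of_nat n else 0)"
    using sum_cis_orthogonal[OF assms] by (intro arg_cong[where f = "(*) _"] sum.cong) auto
  also have "\<dots> = f x" using assms n by (simp add: sum.delta)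
  finally show ?thesis .
qed

definition dirichlet_kernel :: "nat \<Rightarrow> nat \<Rightarrow> real \<Rightarrow> complex" where
  "dirichlet_kernel m n \<theta> = (1 / of_nat m) * (\<Sum>x<n. cis (2 * pi * \<theta> * real x))"

lemma dft_ext_fun_eq_kernel_sum:
  assumes "0 < n" "n \<le> m"
  shows "dft m (ext_fun n m f) \<gamma>
       = (\<Sum>\<beta><n. dft n f \<beta> * dirichlet_kernel m n (real \<beta> / real n - real \<gamma> / real m))"
proof -
  have char_mult: "cis (2 * pi * real \<beta> * real x / real n) * cis (- 2 * pi * real \<gamma> * real x / real m)
      = cis (2 * pi * (real \<beta> / real n - real \<gamma> / real m) * real x)" for x \<beta>
    unfolding cis_mult by (rule arg_cong[where f = cis]) (simp add: algebra_simps)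
  have "dft m (ext_fun n m f) \<gamma> = (1 / of_nat m) * (\<Sum>x<m. ext_fun n m f x * cis (- 2 * pi * real \<gamma> * real x / real m))"
    unfolding dft_def exp_eq_cis ..
  also have "(\<Sum>x<m. ext_fun n m f x * cis (- 2 * pi * real \<gamma> * real x / real m))
      = (\<Sum>x<n. f x * cis (- 2 * pi * real \<gamma> * real x / real m))"
    by (rule sum.mono_neutral_cong_right) (use assms in \<open>auto simp: ext_fun_def\<close>)
  also have "\<dots> = (\<Sum>x<n. (\<Sum>\<beta><n. dft n f \<beta> * cis (2 * pi * real \<beta> * real x / real n)) * cis (- 2 * pi * real \<gamma> * real x / real m))"
    using dft_inversion by simp
  also have "\<dots> = (\<Sum>x<n. \<Sum>\<beta><n. dft n f \<beta> * cis (2 * pi * (real \<beta> / real n - real \<gamma> / real m) * real x))"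
    unfolding sum_distrib_right by (intro sum.cong refl) (metis mult.assoc char_mult)
  also have "\<dots> = (\<Sum>\<beta><n. dft n f \<beta> * (\<Sum>x<n. cis (2 * pi * (real \<beta> / real n - real \<gamma> / real m) * real x)))"
    unfolding sum_distrib_left by (rule sum.swap)
  finally show ?thesis
    by (simp add: dirichlet_kernel_def sum_distrib_left mult_ac)
qed

subsection \<open>Estimates for the kernel\<close>

lemma norm_dirichlet_kernel_mult_abs_sin:
  "m > 0 \<Longrightarrow> cmod (dirichlet_kernel m n \<theta>) * real m * \<bar>sin (pi * \<theta>)\<bar> = \<bar>sin (pi * real n * \<theta>)\<bar>"
  unfolding dirichlet_kernel_def using norm_sum_cis_mult_abs_sin[of \<theta> n]
  by (simp add: norm_mult norm_divide)

lemma dirichlet_kernel_add_of_int: "dirichlet_kernel m n (\<theta> + of_int j) = dirichlet_kernel m n \<theta>"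
proof -
  have "cis (2 * pi * (\<theta> + of_int j) * real x) = cis (2 * pi * \<theta> * real x)" for x
  proof -
    have "cis (2 * pi * (\<theta> + of_int j) * real x) = cis (2 * pi * \<theta> * real x) * cis (2 * pi * of_int (j * int x))"
      by (simp add: cis_mult algebra_simps)
    also have "cis (2 * pi * of_int (j * int x)) = 1" by (rule cis_multiple_2pi) simp
    finally show ?thesis by simp
  qed
  thus ?thesis unfolding dirichlet_kernel_def by simp
qed

lemma cubic_ge_11_25:
  fixes u :: real
  assumes "1/2 \<le> u" "u \<le> 1"
  shows "11/25 \<le> u * (1 - 5/12 * u^2)"
proof -
  define v where "v = u - 1/2"
  have v: "0 \<le> v" "v \<le> 1/2" using assms unfolding v_def by auto
  have "v * v \<le> v * (1/2)" using v by (intro mult_left_mono) auto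
  hence v2: "v^2 \<le> v / 2" by (simp add: power2_eq_square)
  have "v * v^2 \<le> v * (v / 2)" using v v2 by (intro mult_left_mono) auto
  hence "v^3 \<le> v / 4" using v2 by (simp add: power3_eq_cube power2_eq_square)
  moreover have "u * (1 - 5/12 * u^2) = 1/2 - 5/96 + v * (11/16) - 5/8 * v^2 - 5/12 * v^3"
    unfolding v_def power2_eq_square power3_eq_cube by (simp add: field_simps)
  ultimately show ?thesis using v v2 by linarith
qed

lemma norm_dirichlet_kernel_ge:
  assumes "0 < n" "n \<le> m" "m \<le> 2 * n" "\<bar>\<delta>\<bar> \<le> 1 / (2 * real m)"
  shows "cmod (dirichlet_kernel m n \<delta>) \<ge> 11/25"
proof (cases "\<delta> = 0")
  define u where "u = real n / real m"
  have m: "real m > 0" using assms by simp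
  have u: "1/2 \<le> u" "u \<le> 1" using assms m unfolding u_def by (auto simp: field_simps)
  {
    case True
    have "dirichlet_kernel m n \<delta> = of_real u" unfolding dirichlet_kernel_def True u_def by simp
    thus ?thesis using u cubic_ge_11_25[OF u] by simp
  next
    case False
    define t where "t = pi * real n * \<bar>\<delta>\<bar>"
    have t: "0 < t" "t \<le> pi * u / 2"
      using False assms m unfolding t_def u_def by (auto simp: field_simps)
    moreover have "pi * u \<le> pi * 1" using u by (intro mult_left_mono) auto
    ultimately have "t \<le> pi" by linarith
    with t have "\<bar>sin t\<bar> = sin t" by (intro abs_of_nonneg sin_ge_zero) auto
    moreover have "\<bar>sin (pi * real n * \<delta>)\<bar> = \<bar>sin t\<bar>"
      unfolding t_def by (cases "\<delta> \<ge> 0") (auto simp: abs_if)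
    ultimately have "\<bar>sin (pi * real n * \<delta>)\<bar> = sin t" by simp
    also have "sin t \<ge> t * (1 - t^2 / 6)"
      using sin_ge_cubic[of t] t by (simp add: algebra_simps power3_eq_cube power2_eq_square)
    moreover have "\<bar>sin (pi * \<delta>)\<bar> \<le> pi * \<bar>\<delta>\<bar>"
      using abs_sin_x_le_abs_x[of "pi * \<delta>"] by (simp add: abs_mult)
    ultimately have "t * (1 - t^2 / 6) \<le> cmod (dirichlet_kernel m n \<delta>) * real m * (pi * \<bar>\<delta>\<bar>)"
      using norm_dirichlet_kernel_mult_abs_sin[of m n \<delta>] m
        mult_left_mono[of "\<bar>sin (pi * \<delta>)\<bar>" "pi * \<bar>\<delta>\<bar>" "cmod (dirichlet_kernel m n \<delta>) * real m"]
      by simp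
    hence "(pi * \<bar>\<delta>\<bar>) * (real n * (1 - t^2 / 6)) \<le> (pi * \<bar>\<delta>\<bar>) * (cmod (dirichlet_kernel m n \<delta>) * real m)"
      unfolding t_def by (simp add: algebra_simps)
    hence "real n * (1 - t^2 / 6) \<le> cmod (dirichlet_kernel m n \<delta>) * real m"
      using False by (simp add: mult_le_cancel_left_pos)
    hence "u * (1 - t^2 / 6) \<le> cmod (dirichlet_kernel m n \<delta>)"
      using m unfolding u_def by (simp add: field_simps)
    moreover have "t^2 \<le> 10/4 * u^2"
    proof -
      have "t^2 \<le> (pi * u / 2)^2" using t by (intro power_mono) auto
      moreover have "pi * pi \<le> 3.15 * 3.15" using pi_approx(2) by (intro mult_mono) auto
      hence "pi^2 \<le> 10" by (simp add: power2_eq_square)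
      hence "pi^2 * u^2 \<le> 10 * u^2" by (intro mult_right_mono) auto
      ultimately show ?thesis by (simp add: power_mult_distrib power_divide)
    qed
    hence "u * (1 - 5/12 * u^2) \<le> u * (1 - t^2 / 6)" using u by (intro mult_left_mono) auto
    ultimately show ?thesis using cubic_ge_11_25[OF u] by linarith
  }
qed

lemma norm_dirichlet_kernel_le:
  assumes "1 \<le> k" "k < n" "n \<le> m" "\<bar>\<delta>\<bar> \<le> 1 / (2 * real m)"
  shows "cmod (dirichlet_kernel m n (real k / real n + \<delta>)) \<le> 1 / real (min k (n - k))"
proof -
  define s where "s = real k / real n + \<delta>"
  define d where "d = real (min k (n - k))"
  have n: "real n > 0" and m: "real m > 0" using assms by auto
  have d: "1 \<le> d" "d \<le> real k" "d \<le> real n - real k" using assms unfolding d_def by auto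
  have "1 / (2 * real m) \<le> 1 / (2 * real n)" using assms n by (intro divide_left_mono) auto
  hence \<delta>: "2 * \<bar>\<delta>\<bar> \<le> 1 / real n" using assms by simp
  have "d / real n \<le> (2 * real k - 1) / real n" "d / real n \<le> (2 * (real n - real k) - 1) / real n"
    using d n by (auto intro: divide_right_mono)
  moreover have "(2 * real k - 1) / real n \<le> 2 * s" "(2 * (real n - real k) - 1) / real n \<le> 2 * (1 - s)"
    unfolding s_def using \<delta> n by (auto simp: diff_divide_distrib abs_le_iff)
  ultimately have min_s: "d / real n \<le> 2 * min s (1 - s)" by linarith
  have "0 < d / real n" using d n by simp
  hence s: "0 \<le> s" "s \<le> 1" using min_s by (auto simp: min_def split: if_splits)
  have "cmod (dirichlet_kernel m n s) * real m * (d / real n)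
      \<le> cmod (dirichlet_kernel m n s) * real m * \<bar>sin (pi * s)\<bar>"
    using abs_sin_pi_ge_min[OF s] min_s m by (intro mult_left_mono) auto
  also have "\<dots> \<le> 1" using norm_dirichlet_kernel_mult_abs_sin[of m n s] m by simp
  finally have "cmod (dirichlet_kernel m n s) * (real m / real n) * d \<le> 1" by simp
  moreover have "cmod (dirichlet_kernel m n s) * 1 * d \<le> cmod (dirichlet_kernel m n s) * (real m / real n) * d"
    using assms n d by (intro mult_right_mono mult_left_mono) auto
  ultimately have "cmod (dirichlet_kernel m n s) * d \<le> 1" by simp
  hence "cmod (dirichlet_kernel m n s) \<le> 1 / d" using d by (simp add: field_simps)
  thus ?thesis unfolding s_def d_def .
qed

subsection \<open>Circular distances\<close>

definition circ_diff :: "nat \<Rightarrow> nat \<Rightarrow> nat \<Rightarrow> nat" where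
  "circ_diff n \<alpha> \<beta> = nat ((int \<beta> - int \<alpha>) mod int n)"

text \<open>\<open>circ_weight n \<alpha> \<beta>\<close> is \<open>1 / |\<beta> - \<alpha>|_n\<close> for \<open>\<beta> \<noteq> \<alpha>\<close>, and \<open>1 / 0 = 0\<close> for \<open>\<beta> = \<alpha>\<close>.\<close>

definition circ_weight :: "nat \<Rightarrow> nat \<Rightarrow> nat \<Rightarrow> real" where
  "circ_weight n \<alpha> \<beta> = 1 / real (min (circ_diff n \<alpha> \<beta>) (n - circ_diff n \<alpha> \<beta>))"

lemma real_circ_diff:
  assumes "0 < n"
  shows "real (circ_diff n \<alpha> \<beta>) = real \<beta> - real \<alpha> - real n * of_int ((int \<beta> - int \<alpha>) div int n)"
proof -
  have "int (circ_diff n \<alpha> \<beta>) = (int \<beta> - int \<alpha>) mod int n"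
    using assms unfolding circ_diff_def by simp
  also have "\<dots> = (int \<beta> - int \<alpha>) - int n * ((int \<beta> - int \<alpha>) div int n)"
    by (simp add: minus_div_mult_eq_mod[symmetric] mult.commute)
  finally have "int (circ_diff n \<alpha> \<beta>) = (int \<beta> - int \<alpha>) - int n * ((int \<beta> - int \<alpha>) div int n)" .
  hence "real_of_int (int (circ_diff n \<alpha> \<beta>)) = real_of_int ((int \<beta> - int \<alpha>) - int n * ((int \<beta> - int \<alpha>) div int n))"
    by (rule arg_cong)
  thus ?thesis by simp
qed

lemma circ_diff_self [simp]: "circ_diff n \<alpha> \<alpha> = 0"
  unfolding circ_diff_def by simp

lemma circ_diff_less: "0 < n \<Longrightarrow> circ_diff n \<alpha> \<beta> < n"
  unfolding circ_diff_def by (simp add: nat_less_iff)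

lemma circ_diff_pos:
  assumes "\<alpha> < n" "\<beta> < n" "\<beta> \<noteq> \<alpha>"
  shows "0 < circ_diff n \<alpha> \<beta>"
proof (rule ccontr)
  assume "\<not> 0 < circ_diff n \<alpha> \<beta>"
  moreover have "(int \<beta> - int \<alpha>) mod int n \<ge> 0" using assms by simp
  ultimately have "int n dvd (int \<beta> - int \<alpha>)"
    unfolding circ_diff_def by (simp add: dvd_eq_mod_eq_0)
  moreover have "int \<beta> - int \<alpha> \<noteq> 0" using assms by simp
  ultimately have "\<bar>int n\<bar> \<le> \<bar>int \<beta> - int \<alpha>\<bar>" by (rule dvd_imp_le_int[rotated])
  thus False using assms by auto
qed

lemma inj_on_circ_diff: "inj_on (circ_diff n \<alpha>) {..<n}"
proof (rule inj_onI)
  fix x y assume xy: "x \<in> {..<n}" "y \<in> {..<n}" "circ_diff n \<alpha> x = circ_diff n \<alpha> y"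
  hence "(int x - int \<alpha>) mod int n = (int y - int \<alpha>) mod int n"
    unfolding circ_diff_def by (simp add: nat_eq_iff2)
  hence "int n dvd (int x - int y)" by (simp add: mod_eq_dvd_iff)
  show "x = y"
  proof (rule ccontr)
    assume "x \<noteq> y"
    hence "\<bar>int n\<bar> \<le> \<bar>int x - int y\<bar>" by (intro dvd_imp_le_int) (use \<open>int n dvd _\<close> in auto)
    thus False using xy by auto
  qed
qed

lemma circ_abs_le: "circ_abs k x \<le> \<bar>x - real k * of_int z\<bar>"
  unfolding circ_abs_def by (rule cInf_lower) (auto intro!: bdd_belowI[of _ 0])

lemma circ_abs_le_circ_diff:
  assumes "0 < n"
  shows "circ_abs n (real \<beta> - real \<beta>')
    \<le> \<bar>real (circ_diff n \<alpha> \<beta>) - real (circ_diff n \<alpha> \<beta>') - real n * of_int j\<bar>"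
proof -
  define z where "z \<beta> = (int \<beta> - int \<alpha>) div int n" for \<beta>
  have "real (circ_diff n \<alpha> \<beta>) - real (circ_diff n \<alpha> \<beta>') - real n * of_int j
      = (real \<beta> - real \<beta>') - real n * of_int (z \<beta> - z \<beta>' + j)"
    unfolding real_circ_diff[OF assms] z_def by (simp add: algebra_simps)
  thus ?thesis using circ_abs_le by metis
qed

lemma sum_circ_weight_le:
  assumes "\<alpha> < n"
  shows "(\<Sum>\<beta>\<in>{..<n} - {\<alpha>}. circ_weight n \<alpha> \<beta>) \<le> 2 + 2 * ln (real n)"
proof -
  define h where "h k = 1 / real k + 1 / real (n - k)" for k
  have range: "circ_diff n \<alpha> ` ({..<n} - {\<alpha>}) \<subseteq> {1..n - 1}"
  proof (rule image_subsetI)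
    fix \<beta> assume "\<beta> \<in> {..<n} - {\<alpha>}"
    thus "circ_diff n \<alpha> \<beta> \<in> {1..n - 1}"
      using circ_diff_pos[OF assms, of \<beta>] circ_diff_less[of n \<alpha> \<beta>] by auto
  qed
  have "(\<Sum>\<beta>\<in>{..<n} - {\<alpha>}. circ_weight n \<alpha> \<beta>) \<le> (\<Sum>\<beta>\<in>{..<n} - {\<alpha>}. h (circ_diff n \<alpha> \<beta>))"
    unfolding circ_weight_def h_def by (intro sum_mono) (auto simp: min_def)
  also have "\<dots> = (\<Sum>k\<in>circ_diff n \<alpha> ` ({..<n} - {\<alpha>}). h k)"
    by (subst sum.reindex) (auto intro: inj_on_subset[OF inj_on_circ_diff])
  also have "\<dots> \<le> (\<Sum>k\<in>{1..n - 1}. h k)"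
    using range unfolding h_def by (intro sum_mono2) auto
  also have "\<dots> = harm (n - 1) + harm (n - 1)"
    using sum_inverse_reflect_eq_harm[of "n - 1"] assms
    by (simp add: h_def sum.distrib harm_def divide_inverse)
  also have "\<dots> \<le> 2 + 2 * ln (real n)"
  proof (cases "n = 1")
    case False
    hence "harm (n - 1) \<le> 1 + ln (real (n - 1))" using assms by (intro harm_le_one_plus_ln) auto
    also have "ln (real (n - 1)) \<le> ln (real n)" using False assms by (subst ln_le_cancel_iff) auto
    finally show ?thesis by simp
  qed (simp add: harm_def)
  finally show ?thesis .
qed

lemma sum_circ_weight_separated_le:
  assumes "\<alpha> \<in> \<Gamma>" "\<Gamma> \<subseteq> {0..<n}" "r > 0"
    and sep: "\<forall>a\<in>\<Gamma>. \<forall>a'\<in>\<Gamma>. a \<noteq> a' \<longrightarrow> circ_abs n (real a - real a') > r"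
  shows "(\<Sum>\<beta>\<in>\<Gamma> - {\<alpha>}. circ_weight n \<alpha> \<beta>) \<le> 2 * harm (card \<Gamma>) / r"
proof -
  let ?k = "\<lambda>\<beta>. real (circ_diff n \<alpha> \<beta>)"
  have n: "0 < n" using assms by auto
  have fin: "finite \<Gamma>" using assms(2) finite_subset by blast
  have k_less: "circ_diff n \<alpha> \<beta> < n" for \<beta> using circ_diff_less[OF n] .
  have sep_k: "r < \<bar>?k \<beta> - ?k \<beta>' - real n * of_int j\<bar>" if "\<beta> \<in> \<Gamma>" "\<beta>' \<in> \<Gamma>" "\<beta> \<noteq> \<beta>'" for \<beta> \<beta>' j
    using sep that circ_abs_le_circ_diff[OF n, of \<beta> \<beta>' \<alpha> j] by fastforce
  have far: "r < ?k \<beta>" "r < real n - ?k \<beta>" if "\<beta> \<in> \<Gamma>" "\<beta> \<noteq> \<alpha>" for \<beta>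
    using sep_k[OF that(1) assms(1) that(2), of 0] sep_k[OF that(1) assms(1) that(2), of 1] k_less[of \<beta>]
    by auto
  \<comment> \<open>Sort \<open>\<beta>\<close> by the side on which it is nearer to \<open>\<alpha>\<close>; on either side the distances are \<open>r\<close>-separated.\<close>
  define A where "A = {\<beta> \<in> \<Gamma> - {\<alpha>}. circ_diff n \<alpha> \<beta> \<le> n - circ_diff n \<alpha> \<beta>}"
  define B where "B = \<Gamma> - {\<alpha>} - A"
  have AB: "A \<subseteq> \<Gamma> - {\<alpha>}" "finite A" "finite B" "card A \<le> card \<Gamma>" "card B \<le> card \<Gamma>"
    using fin unfolding A_def B_def by (auto intro: card_mono)
  have "(\<Sum>\<beta>\<in>\<Gamma> - {\<alpha>}. circ_weight n \<alpha> \<beta>) = (\<Sum>\<beta>\<in>A. circ_weight n \<alpha> \<beta>) + (\<Sum>\<beta>\<in>B. circ_weight n \<alpha> \<beta>)"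
    using sum.subset_diff[OF AB(1)] fin unfolding B_def by (simp add: add.commute)
  also have "(\<Sum>\<beta>\<in>A. circ_weight n \<alpha> \<beta>) = (\<Sum>\<beta>\<in>A. 1 / ?k \<beta>)"
    by (rule sum.cong) (auto simp: circ_weight_def A_def min_def)
  also have "(\<Sum>\<beta>\<in>B. circ_weight n \<alpha> \<beta>) = (\<Sum>\<beta>\<in>B. 1 / (real n - ?k \<beta>))"
    using k_less by (intro sum.cong) (auto simp: circ_weight_def A_def B_def min_def of_nat_diff less_imp_le)
  also have "(\<Sum>\<beta>\<in>A. 1 / ?k \<beta>) \<le> harm (card A) / r"
    using far sep_k[of _ _ 0] AB assms
    by (intro sum_inverse_separated_image_le_harm) (auto simp: A_def)
  also have "(\<Sum>\<beta>\<in>B. 1 / (real n - ?k \<beta>)) \<le> harm (card B) / r"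
    using far sep_k[of _ _ 0] AB assms
    by (intro sum_inverse_separated_image_le_harm) (auto simp: B_def abs_minus_commute)
  also have "harm (card A) / r + harm (card B) / r \<le> 2 * harm (card \<Gamma>) / r"
  proof -
    have "(harm (card A) :: real) \<le> harm (card \<Gamma>)" "(harm (card B) :: real) \<le> harm (card \<Gamma>)"
      using AB(4,5) by (auto intro: harm_mono)
    thus ?thesis using assms(3) by (simp add: add_divide_distrib[symmetric] divide_right_mono)
  qed
  finally show ?thesis by simp
qed

subsection \<open>Leakage into the rounded frequency\<close>

lemma dft_ext_fun_round_mod_eq:
  assumes "\<alpha> < n" "n \<le> m"
  obtains \<delta> where "\<bar>\<delta>\<bar> \<le> 1 / (2 * real m)"
    and "dft m (ext_fun n m f) (round_mod m (real m / real n * real \<alpha>))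
       = (\<Sum>\<beta><n. dft n f \<beta> * dirichlet_kernel m n (real (circ_diff n \<alpha> \<beta>) / real n + \<delta>))"
proof -
  have n: "0 < n" and m: "0 < m" using assms by auto
  define g where "g = round (real m / real n * real \<alpha>)"
  define \<gamma> where "\<gamma> = round_mod m (real m / real n * real \<alpha>)"
  define \<delta> where "\<delta> = real \<alpha> / real n - of_int g / real m"
  have "int \<gamma> = g mod int m" using m unfolding \<gamma>_def round_mod_def g_def by simp
  also have "\<dots> = g - int m * (g div int m)" by (simp add: minus_div_mult_eq_mod[symmetric] mult.commute)
  finally have \<gamma>: "real \<gamma> = of_int g - real m * of_int (g div int m)"
    by (metis of_int_diff of_int_mult of_int_of_nat_eq)
  have "\<bar>of_int g - real m / real n * real \<alpha>\<bar> \<le> 1/2" unfolding g_def by (rule of_int_round_abs_le)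
  moreover have "\<delta> * real m = - (of_int g - real m / real n * real \<alpha>)"
    unfolding \<delta>_def using m n by (simp add: field_simps)
  ultimately have "\<bar>\<delta> * real m\<bar> \<le> 1/2" by (simp only: abs_minus_cancel)
  hence "\<bar>\<delta>\<bar> * real m \<le> 1/2" by (simp add: abs_mult)
  hence "\<bar>\<delta>\<bar> \<le> 1 / (2 * real m)" using m by (simp add: field_simps)
  moreover have "dirichlet_kernel m n (real \<beta> / real n - real \<gamma> / real m)
      = dirichlet_kernel m n (real (circ_diff n \<alpha> \<beta>) / real n + \<delta>)" for \<beta>
  proof -
    define z where "z = (int \<beta> - int \<alpha>) div int n"
    have "real \<beta> / real n - real \<gamma> / real m
        = (real (circ_diff n \<alpha> \<beta>) / real n + \<delta>) + of_int (z + g div int m)"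
      unfolding real_circ_diff[OF n] \<gamma> \<delta>_def z_def using m n by (simp add: field_simps)
    thus ?thesis by (simp only: dirichlet_kernel_add_of_int)
  qed
  ultimately show ?thesis
    using that dft_ext_fun_eq_kernel_sum[OF n assms(2), of f \<gamma>] unfolding \<gamma>_def by simp
qed

lemma norm_dft_ext_fun_round_mod_ge:
  assumes "\<alpha> < n" "n \<le> m" "m \<le> 2 * n"
  shows "cmod (dft m (ext_fun n m f) (round_mod m (real m / real n * real \<alpha>)))
    \<ge> 11/25 * cmod (dft n f \<alpha>) - (\<Sum>\<beta>\<in>{..<n} - {\<alpha>}. cmod (dft n f \<beta>) * circ_weight n \<alpha> \<beta>)"
proof -
  obtain \<delta> where \<delta>: "\<bar>\<delta>\<bar> \<le> 1 / (2 * real m)"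
    and eq: "dft m (ext_fun n m f) (round_mod m (real m / real n * real \<alpha>))
       = (\<Sum>\<beta><n. dft n f \<beta> * dirichlet_kernel m n (real (circ_diff n \<alpha> \<beta>) / real n + \<delta>))"
    using dft_ext_fun_round_mod_eq[OF assms(1,2)] .
  define K where "K \<beta> = dirichlet_kernel m n (real (circ_diff n \<alpha> \<beta>) / real n + \<delta>)" for \<beta>
  define R where "R = {..<n} - {\<alpha>}"
  have n: "0 < n" using assms by simp
  have peak: "11/25 \<le> cmod (K \<alpha>)"
    unfolding K_def using norm_dirichlet_kernel_ge[OF n assms(2,3) \<delta>] by simp
  have tail: "cmod (K \<beta>) \<le> circ_weight n \<alpha> \<beta>" if "\<beta> \<in> R" for \<beta>
    unfolding K_def circ_weight_def using that circ_diff_pos[OF assms(1)] circ_diff_less[OF n]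
    by (intro norm_dirichlet_kernel_le[OF _ _ assms(2) \<delta>]) (auto simp: R_def Suc_le_eq)
  have "cmod (\<Sum>\<beta>\<in>R. dft n f \<beta> * K \<beta>) \<le> (\<Sum>\<beta>\<in>R. cmod (dft n f \<beta>) * circ_weight n \<alpha> \<beta>)"
    using tail by (auto intro!: order.trans[OF norm_sum] sum_mono mult_left_mono simp: norm_mult)
  moreover have "cmod (dft n f \<alpha> * K \<alpha>) - cmod (\<Sum>\<beta>\<in>R. dft n f \<beta> * K \<beta>) \<le> cmod (\<Sum>\<beta><n. dft n f \<beta> * K \<beta>)"
    unfolding R_def using assms(1) by (subst sum.remove[of _ \<alpha>]) (auto intro: norm_diff_ineq)
  moreover have "11/25 * cmod (dft n f \<alpha>) \<le> cmod (dft n f \<alpha> * K \<alpha>)"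
    using mult_right_mono[OF peak norm_ge_zero[of "dft n f \<alpha>"]] by (simp add: norm_mult mult.commute)
  ultimately show ?thesis unfolding eq K_def[symmetric] R_def[symmetric] by linarith
qed

lemma sum_norm_mult_circ_weight_separated_le:
  fixes F :: "nat \<Rightarrow> complex"
  assumes "\<alpha> \<in> \<Gamma>" "\<Gamma> \<subseteq> {0..<n}" "C > 0" "L \<ge> 0"
    and r: "r = 20 * C * (ln (real (card \<Gamma>) / 2) + 1)"
    and sep: "\<forall>a\<in>\<Gamma>. \<forall>a'\<in>\<Gamma>. a \<noteq> a' \<longrightarrow> circ_abs n (real a - real a') > r"
    and bound: "\<forall>\<beta>\<in>\<Gamma>. cmod (F \<beta>) \<le> C * L"
  shows "(\<Sum>\<beta>\<in>\<Gamma> - {\<alpha>}. cmod (F \<beta>) * circ_weight n \<alpha> \<beta>) \<le> 19/100 * L"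
proof -
  define W where "W = (\<Sum>\<beta>\<in>\<Gamma> - {\<alpha>}. circ_weight n \<alpha> \<beta>)"
  have fin: "finite \<Gamma>" using assms(2) finite_subset by blast
  have CW: "C * W \<le> 19/100"
  proof (cases "\<Gamma> - {\<alpha>} = {}")
    case True
    thus ?thesis unfolding W_def by (simp only: sum.empty)
  next
    case False
    then obtain \<beta> where "\<beta> \<in> \<Gamma>" "\<beta> \<noteq> \<alpha>" by auto
    hence "card {\<alpha>, \<beta>} \<le> card \<Gamma>" using assms(1) fin by (intro card_mono) auto
    hence "card \<Gamma> \<ge> 2" using \<open>\<beta> \<noteq> \<alpha>\<close> by simp
    define y where "y = ln (real (card \<Gamma>))"
    have y: "y \<ge> ln 2" unfolding y_def using \<open>card \<Gamma> \<ge> 2\<close> by (subst ln_le_cancel_iff) auto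
    have "real (card \<Gamma>) > 0" using \<open>card \<Gamma> \<ge> 2\<close> by simp
    hence r_y: "r = 20 * C * (y - ln 2 + 1)" unfolding r y_def by (simp add: ln_div)
    have "r > 0" unfolding r_y using assms(3) y ln_2_le by (intro mult_pos_pos) auto
    have "W \<le> 2 * harm (card \<Gamma>) / r"
      unfolding W_def using sum_circ_weight_separated_le[OF assms(1,2) \<open>r > 0\<close> sep] .
    also have "\<dots> \<le> 2 * (1 + y) / r"
      unfolding y_def using harm_le_one_plus_ln[of "card \<Gamma>"] \<open>card \<Gamma> \<ge> 2\<close> \<open>r > 0\<close>
      by (intro divide_right_mono) auto
    finally have "C * W \<le> C * (2 * (1 + y) / r)" using assms(3) by (intro mult_left_mono) auto
    also have "\<dots> = (1 + y) / (10 * (y - ln 2 + 1))"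
      unfolding r_y using assms(3) y ln_2_le by (simp add: divide_simps) (simp add: algebra_simps)
    also have "\<dots> \<le> 19/100"
      using y ln_2_le by (simp add: divide_le_eq)
    finally show ?thesis .
  qed
  have "(\<Sum>\<beta>\<in>\<Gamma> - {\<alpha>}. cmod (F \<beta>) * circ_weight n \<alpha> \<beta>) \<le> (\<Sum>\<beta>\<in>\<Gamma> - {\<alpha>}. C * L * circ_weight n \<alpha> \<beta>)"
    using bound by (intro sum_mono mult_right_mono) (auto simp: circ_weight_def)
  also have "\<dots> = L * (C * W)" by (simp add: W_def sum_distrib_left mult_ac)
  also have "\<dots> \<le> L * (19/100)" using CW assms(4) by (rule mult_left_mono)
  finally show ?thesis by simp
qed

lemma sum_norm_mult_circ_weight_small_le:
  fixes F :: "nat \<Rightarrow> complex"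
  assumes "\<alpha> \<in> \<Gamma>" "\<alpha> < n" "L > 0"
    and \<tau>: "\<tau> < L / 20 * (1 / (3 + 2 * ln (real n)))"
    and bound: "\<forall>\<beta>\<in>{0..<n} - \<Gamma>. cmod (F \<beta>) \<le> \<tau>"
  shows "(\<Sum>\<beta>\<in>{0..<n} - \<Gamma>. cmod (F \<beta>) * circ_weight n \<alpha> \<beta>) \<le> L / 20"
proof -
  define \<tau>' where "\<tau>' = max \<tau> 0"
  have ln: "ln (real n) \<ge> 0" using assms(2) by simp
  have "(\<Sum>\<beta>\<in>{0..<n} - \<Gamma>. cmod (F \<beta>) * circ_weight n \<alpha> \<beta>) \<le> (\<Sum>\<beta>\<in>{0..<n} - \<Gamma>. \<tau>' * circ_weight n \<alpha> \<beta>)"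
    using bound unfolding \<tau>'_def by (intro sum_mono mult_right_mono) (auto simp: circ_weight_def le_max_iff_disj)
  also have "\<dots> \<le> (\<Sum>\<beta>\<in>{..<n} - {\<alpha>}. \<tau>' * circ_weight n \<alpha> \<beta>)"
    using assms(1) unfolding \<tau>'_def by (intro sum_mono2) (auto simp: circ_weight_def)
  also have "\<dots> \<le> \<tau>' * (2 + 2 * ln (real n))"
    using sum_circ_weight_le[OF assms(2)] unfolding \<tau>'_def sum_distrib_left[symmetric]
    by (intro mult_left_mono) auto
  also have "\<dots> \<le> \<tau>' * (3 + 2 * ln (real n))" unfolding \<tau>'_def by (intro mult_left_mono) auto
  also have "\<dots> \<le> L / 20"
  proof -
    define D where "D = 3 + 2 * ln (real n)"
    have "D > 0" using ln unfolding D_def by simp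
    moreover have "\<tau>' < L / 20 * (1 / D)"
      using \<tau> assms(3) \<open>D > 0\<close> unfolding \<tau>'_def D_def by simp
    ultimately have "\<tau>' * D \<le> L / 20 * (1 / D) * D" by (intro mult_right_mono) auto
    also have "\<dots> = L / 20" using \<open>D > 0\<close> by simp
    finally show ?thesis unfolding D_def .
  qed
  finally show ?thesis .
qed

theorem proposition5p3:
  fixes m n :: nat and L C r \<tau> :: real and \<Gamma> :: "nat set" and f :: "nat \<Rightarrow> complex"
  assumes "n \<le> m" "m \<le> 2 * n"
    and "L > 0" "C > 1"
    and "\<Gamma> \<subseteq> {0..<n}"
    and "r = 20 * C * (ln (real (card \<Gamma>) / 2) + 1)"
    and "\<tau> < L / 20 * (1 / (3 + 2 * ln (real n)))"
    and "\<forall>\<alpha>\<in>\<Gamma>. \<forall>\<alpha>'\<in>\<Gamma>. \<alpha> \<noteq> \<alpha>' \<longrightarrow> circ_abs n (real \<alpha> - real \<alpha>') > r"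
    and "\<forall>\<alpha>\<in>\<Gamma>. L \<le> cmod (dft n f \<alpha>) \<and> cmod (dft n f \<alpha>) \<le> C * L"
    and "\<forall>\<alpha>\<in>{0..<n} - \<Gamma>. cmod (dft n f \<alpha>) \<le> \<tau>"
  shows "\<forall>\<alpha>\<in>\<Gamma>. cmod (dft m (ext_fun n m f) (round_mod m (real m / real n * real \<alpha>))) \<ge> L / 5"
proof
  fix \<alpha> assume \<alpha>: "\<alpha> \<in> \<Gamma>"
  let ?leak = "\<lambda>A. \<Sum>\<beta>\<in>A. cmod (dft n f \<beta>) * circ_weight n \<alpha> \<beta>"
  have "\<alpha> < n" using \<alpha> assms(5) by auto
  have "{..<n} - {\<alpha>} = (\<Gamma> - {\<alpha>}) \<union> ({0..<n} - \<Gamma>)" using \<alpha> assms(5) by auto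
  hence "?leak ({..<n} - {\<alpha>}) = ?leak (\<Gamma> - {\<alpha>}) + ?leak ({0..<n} - \<Gamma>)"
    using finite_subset[OF assms(5)] by (simp add: sum.union_disjoint Diff_Int_distrib2)
  moreover have "?leak (\<Gamma> - {\<alpha>}) \<le> 19/100 * L"
    using sum_norm_mult_circ_weight_separated_le[OF \<alpha> assms(5) _ _ assms(6,8)] assms(3,4,9) by auto
  moreover have "?leak ({0..<n} - \<Gamma>) \<le> L / 20"
    using assms(3,7,10) \<alpha> \<open>\<alpha> < n\<close> by (intro sum_norm_mult_circ_weight_small_le) auto
  moreover have "L \<le> cmod (dft n f \<alpha>)" using assms(9) \<alpha> by auto
  ultimately show "cmod (dft m (ext_fun n m f) (round_mod m (real m / real n * real \<alpha>))) \<ge> L / 5"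
    using norm_dft_ext_fun_round_mod_ge[OF \<open>\<alpha> < n\<close> assms(1,2), of f] by linarith
qed

end
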